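(* Let $\mathcal{Z}$ be a data space with unknown distribution $\mu$, let $S=(Z_1,\dots,Z_n)$ have i.i.d. entries $Z_i\sim\mu$, let $\mathcal{W}$ be a hypothesis class, and let the learning algorithm be a Markov kernel $P_{W|S}$ producing a hypothesis $W\in\mathcal{W}$. Write $P_W$ for the marginal of $W$ and $P_{W,Z_i}$ for the joint distribution of $(W,Z_i)$, $i=1,\dots,n$. Let $l:\mathcal{W}\times\mathcal{Z}\to\mathbb{R}^+$ be a loss function. For each $i=1,\dots,n$ let $\widehat{P}_{W,Z_i}$ be an auxiliary joint distribution on $\mathcal{W}\times\mathcal{Z}$, and let $\Lambda_{l(W,Z_i)}(\lambda)=\log \mathbb{E}_{\widehat{P}_{W,Z_i}}\big[e^{\lambda(l(W,Z_i)-\mathbb{E}_{\widehat{P}_{W,Z_i}}[l(W,Z_i)])}\big]$ be the cumulant generating function of $l(W,Z_i)$ under $\widehat{P}_{W,Z_i}$. Assume that for every $i=1,\dots,n$, $\Lambda_{l(W,Z_i)}(\lambda)$ exists, $\Lambda_{l(W,Z_i)}(\lambda)\le\psi_+(\lambda)$ for all $\lambda\in[0,b_+)$ with $0<b_+<+\infty$, and $\Lambda_{l(W,Z_i)}(\lambda)\le\psi_-(-\lambda)$ for all $\lambda\in(b_-,0]$ (with $b_-<0$), where $\psi_+$ and $\psi_-$ are convex functions satisfying $\psi_-(0)=\psi_+(0)=\psi_+'(0)=\psi_-'(0)=0$. Define $\psi_+^{\star-1}(x)=\inf_{\lambda\in(0,b_+)}\frac{x+\psi_+(\lambda)}{\lambda}$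 and $\psi_-^{\star-1}(x)=\inf_{\lambda\in(0,-b_-)}\frac{x+\psi_-(\lambda)}{\lambda}$, and set $A_i=KL(P_W\otimes\mu\,\|\,\widehat{P}_{W,Z_i})$ and $B_i=KL(P_{W,Z_i}\,\|\,\widehat{P}_{W,Z_i})$. Then $$\overline{\text{gen}}(P_{W|S},\mu)\le\frac1n\sum_{i=1}^n\big(\psi_+^{\star-1}(A_i)+\psi_-^{\star-1}(B_i)\big),\qquad -\overline{\text{gen}}(P_{W|S},\mu)\le\frac1n\sum_{i=1}^n\big(\psi_-^{\star-1}(A_i)+\psi_+^{\star-1}(B_i)\big).$$
   Context: Population risk: $L_P(w,\mu)=\int_{\mathcal{Z}} l(w,z)\,\mu(dz)$. Empirical risk: $L_E(w,S)=\frac1n\sum_{i=1}^n l(w,Z_i)$. Expected generalization error: $\overline{\text{gen}}(P_{W|S},\mu)=\mathbb{E}_{P_{W,S}}[L_P(W,\mu)-L_E(W,S)]$. $KL(P\|Q)=\int \log\frac{dP}{dQ}\,dP$ is the Kullback–Leibler divergence (natural logarithm). $P_W\otimes\mu$ denotes the product measure. *)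

theory Defs
  imports "HOL-Probability.Probability"
begin

text \<open>Kullback--Leibler divergence KL(P || Q) with natural logarithm, valued in the
extended reals: if P is absolutely continuous w.r.t. Q and the log-likelihood ratio
log (dP/dQ) is P-integrable, it is the integral of log (dP/dQ) against P; otherwise it
is +infinity (for probability measures this is exactly the usual convention).\<close>
definition KL :: "'a measure \<Rightarrow> 'a measure \<Rightarrow> ereal" where
  "KL P Q =
     (if absolutely_continuous Q P \<and>
         integrable P (\<lambda>x. ln (enn2real (RN_deriv Q P x)))
      then ereal (\<integral>x. ln (enn2real (RN_deriv Q P x)) \<partial>P)
      else \<infinity>)"

definition cgf :: "'a measure \<Rightarrow> ('a \<Rightarrow> real) \<Rightarrow> real \<Rightarrow> real" where
  "cgf P f lam = ln (\<integral>x. exp (lam * (f x - (\<integral>y. f y \<partial>P))) \<partial>P)"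

definition cgf_exists :: "'a measure \<Rightarrow> ('a \<Rightarrow> real) \<Rightarrow> real \<Rightarrow> bool" where
  "cgf_exists P f lam \<longleftrightarrow>
     integrable P f \<and> integrable P (\<lambda>x. exp (lam * (f x - (\<integral>y. f y \<partial>P))))"

definition psi_star_inv :: "(real \<Rightarrow> real) \<Rightarrow> real set \<Rightarrow> ereal \<Rightarrow> ereal" where
  "psi_star_inv psi I x = (INF lam\<in>I. (x + ereal (psi lam)) / ereal lam)"

definition joint_WS :: "'w measure \<Rightarrow> 's measure \<Rightarrow> ('s \<Rightarrow> 'w measure) \<Rightarrow> ('w \<times> 's) measure" where
  "joint_WS MW SS K = SS \<bind> (\<lambda>s. distr (K s) (MW \<Otimes>\<^sub>M SS) (\<lambda>w. (w, s)))"

definition gen_bar :: "nat \<Rightarrow> ('w \<Rightarrow> 'z \<Rightarrow> real) \<Rightarrow> ('w \<times> (nat \<Rightarrow> 'z)) measure \<Rightarrow> 'z measure \<Rightarrow> real" where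
  "gen_bar n l PWS mu =
     (\<integral>ws. ((\<integral>z. l (fst ws) z \<partial>mu) - (\<Sum>i<n. l (fst ws) (snd ws i)) / real n) \<partial>PWS)"

end

theory Submission
  imports Defs
begin

text \<open>Donsker--Varadhan: for probability measures P and Q, E_P g \<le> KL(P || Q) + ln E_Q exp g.
  Taking g = lam (f - E_Q f) with lam > 0 gives lam (E_P f - E_Q f) \<le> KL(P || Q) + psi lam whenever the
  cumulant generating function of f under Q is bounded by psi; dividing by lam and minimising over lam
  bounds E_P f - E_Q f by psi_star_inv psi (KL(P || Q)), and f = -l handles the opposite gap.
  The generalization error is the average over i of E_{P_W x mu} l - E_{P_{W,Z_i}} l; inserting
  E_{Phat i} l in the middle splits each term into two gaps of this kind.\<close>

lemma integral_exp_pos: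
  fixes g :: "'a \<Rightarrow> real"
  assumes "prob_space M" and int: "integrable M (\<lambda>x. exp (g x))"
  shows "0 < (\<integral>x. exp (g x) \<partial>M)"
proof -
  have "(\<integral>x. exp (g x) \<partial>M) \<noteq> 0"
  proof
    assume "(\<integral>x. exp (g x) \<partial>M) = 0"
    then have "AE x in M. exp (g x) = 0"
      by (subst (asm) integral_nonneg_eq_0_iff_AE[OF int]) auto
    then show False using prob_space.AE_False[OF assms(1)] by simp
  qed
  moreover have "0 \<le> (\<integral>x. exp (g x) \<partial>M)" by simp
  ultimately show ?thesis by linarith
qed

lemma AE_RN_deriv_pos:
  assumes "prob_space P" "prob_space Q" "absolutely_continuous Q P" "sets P = sets Q"
  shows "AE x in P. 0 < enn2real (RN_deriv Q P x)"
proof -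
  interpret P: prob_space P by fact
  interpret Q: prob_space Q by fact
  have "AE x in Q. 0 < RN_deriv Q P x \<longrightarrow> 0 < enn2real (RN_deriv Q P x)"
    using Q.RN_deriv_finite[OF P.sigma_finite_measure assms(3,4)]
    by eventually_elim (auto simp: enn2real_positive_iff less_top)
  then have "AE x in density Q (RN_deriv Q P). 0 < enn2real (RN_deriv Q P x)"
    by (subst AE_density) auto
  then show ?thesis unfolding Q.density_RN_deriv[OF assms(3,4)] .
qed

lemma
  assumes "prob_space P" "prob_space Q" "absolutely_continuous Q P" "sets P = sets Q"
    and u: "integrable Q u" "\<And>x. 0 \<le> u x"
  shows integrable_divide_RN_deriv: "integrable P (\<lambda>x. u x / enn2real (RN_deriv Q P x))"
    and integral_divide_RN_deriv_le: "(\<integral>x. u x / enn2real (RN_deriv Q P x) \<partial>P) \<le> (\<integral>x. u x \<partial>Q)"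
proof -
  interpret P: prob_space P by fact
  interpret Q: prob_space Q by fact
  have [measurable]: "u \<in> borel_measurable Q" using u(1) by auto
  have "(\<lambda>x. u x / enn2real (RN_deriv Q P x)) \<in> borel_measurable Q" by measurable
  then have meas: "(\<lambda>x. u x / enn2real (RN_deriv Q P x)) \<in> borel_measurable P"
    using measurable_cong_sets[OF assms(4) refl] by blast
  have nonneg: "0 \<le> u x / enn2real (RN_deriv Q P x)" for x using u(2) by simp
  have "(\<integral>\<^sup>+x. ennreal (u x / enn2real (RN_deriv Q P x)) \<partial>P)
      = (\<integral>\<^sup>+x. RN_deriv Q P x * ennreal (u x / enn2real (RN_deriv Q P x)) \<partial>Q)"
    by (rule Q.RN_deriv_nn_integral[OF assms(3,4)]) measurable
  also have "\<dots> \<le> (\<integral>\<^sup>+x. ennreal (u x) \<partial>Q)"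
  proof (rule nn_integral_mono_AE)
    show "AE x in Q. RN_deriv Q P x * ennreal (u x / enn2real (RN_deriv Q P x)) \<le> ennreal (u x)"
      using Q.RN_deriv_finite[OF P.sigma_finite_measure assms(3,4)]
    proof eventually_elim
      case (elim x)
      then obtain r where r: "RN_deriv Q P x = ennreal r" "0 \<le> r"
        by (cases "RN_deriv Q P x") auto
      show ?case
        using r u(2)[of x] by (cases "r = 0") (simp_all add: ennreal_mult[symmetric])
    qed
  qed
  also have "\<dots> = ennreal (\<integral>x. u x \<partial>Q)" using u by (intro nn_integral_eq_integral) auto
  finally have le: "(\<integral>\<^sup>+x. ennreal (u x / enn2real (RN_deriv Q P x)) \<partial>P) \<le> ennreal (\<integral>x. u x \<partial>Q)" .
  show "integrable P (\<lambda>x. u x / enn2real (RN_deriv Q P x))"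
    using le by (intro integrableI_nonneg[OF meas]) (auto simp: nonneg less_top[symmetric] top_unique)
  show "(\<integral>x. u x / enn2real (RN_deriv Q P x) \<partial>P) \<le> (\<integral>x. u x \<partial>Q)"
    using le u(2) by (subst integral_eq_nn_integral[OF meas]) (auto simp: nonneg integral_nonneg enn2real_leI)
qed

lemma integral_le_KL_plus_ln_integral_exp:
  fixes g :: "'a \<Rightarrow> real"
  assumes P: "prob_space P" and Q: "prob_space Q" and sets: "sets P = sets Q"
    and gP: "integrable P g" and eQ: "integrable Q (\<lambda>x. exp (g x))"
  shows "ereal (\<integral>x. g x \<partial>P) \<le> KL P Q + ereal (ln (\<integral>x. exp (g x) \<partial>Q))"
proof (cases "absolutely_continuous Q P \<and> integrable P (\<lambda>x. ln (enn2real (RN_deriv Q P x)))")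
  case False
  then show ?thesis by (auto simp: KL_def)
next
  case True
  then have ac: "absolutely_continuous Q P"
    and ln_r: "integrable P (\<lambda>x. ln (enn2real (RN_deriv Q P x)))" by auto
  interpret P: prob_space P by fact
  define r where "r x = enn2real (RN_deriv Q P x)" for x
  define E where "E = (\<integral>x. exp (g x) \<partial>Q)"
  \<comment> \<open>h is the density of the Gibbs measure e^g Q / E with respect to P.\<close>
  define h where "h x = exp (g x) / E / r x" for x
  have E: "0 < E" unfolding E_def by (rule integral_exp_pos[OF Q eQ])
  have u: "integrable Q (\<lambda>x. exp (g x) / E)" "\<And>x. 0 \<le> exp (g x) / E" using eQ E by auto
  have h_int: "integrable P h"
    unfolding h_def r_def by (rule integrable_divide_RN_deriv[OF P Q ac sets u])
  have "(\<integral>x. h x \<partial>P) \<le> (\<integral>x. exp (g x) / E \<partial>Q)"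
    unfolding h_def r_def by (rule integral_divide_RN_deriv_le[OF P Q ac sets u])
  also have "(\<integral>x. exp (g x) / E \<partial>Q) = 1" using E by (simp add: E_def)
  finally have "(\<integral>x. h x \<partial>P) \<le> 1" .
  have r_pos: "AE x in P. 0 < r x" unfolding r_def by (rule AE_RN_deriv_pos[OF P Q ac sets])
  have "AE x in P. g x - ln (r x) - ln E \<le> h x - 1"
    using r_pos
  proof eventually_elim
    case (elim x)
    then have "ln (h x) = g x - ln (r x) - ln E" using E by (simp add: h_def ln_div ln_mult)
    moreover have "ln (h x) \<le> h x - 1" using elim E by (intro ln_le_minus_one) (simp add: h_def)
    ultimately show ?case by simp
  qed
  then have "(\<integral>x. g x - ln (r x) - ln E \<partial>P) \<le> (\<integral>x. h x - 1 \<partial>P)"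
    using gP ln_r h_int by (intro integral_mono_AE) (auto simp: r_def)
  then have "(\<integral>x. g x \<partial>P) - (\<integral>x. ln (r x) \<partial>P) - ln E \<le> (\<integral>x. h x \<partial>P) - 1"
    using gP ln_r h_int by (simp add: r_def P.prob_space)
  then show ?thesis
    using True \<open>(\<integral>x. h x \<partial>P) \<le> 1\<close> by (simp add: KL_def r_def E_def)
qed

lemma cgf_uminus: "cgf P (\<lambda>x. - f x) lam = cgf P f (- lam)"
  by (simp add: cgf_def algebra_simps)

lemma cgf_exists_uminus: "cgf_exists P (\<lambda>x. - f x) lam \<longleftrightarrow> cgf_exists P f (- lam)"
  by (simp add: cgf_exists_def algebra_simps)

lemma expectation_diff_le_psi_star_inv_KL:
  fixes f :: "'a \<Rightarrow> real" and psi :: "real \<Rightarrow> real"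
  assumes P: "prob_space P" and Q: "prob_space Q" and sets: "sets P = sets Q"
    and fP: "integrable P f" and I_pos: "I \<subseteq> {0<..}"
    and cgf_le: "\<And>lam. lam \<in> I \<Longrightarrow> cgf_exists Q f lam \<and> cgf Q f lam \<le> psi lam"
  shows "ereal ((\<integral>x. f x \<partial>P) - (\<integral>x. f x \<partial>Q)) \<le> psi_star_inv psi I (KL P Q)"
  unfolding psi_star_inv_def
proof (rule INF_greatest)
  interpret P: prob_space P by fact
  fix lam assume "lam \<in> I"
  then have lam: "0 < lam" and ex: "cgf_exists Q f lam" and le: "cgf Q f lam \<le> psi lam"
    using I_pos cgf_le by auto
  define g where "g x = lam * (f x - (\<integral>y. f y \<partial>Q))" for x
  have "ereal (lam * ((\<integral>x. f x \<partial>P) - (\<integral>x. f x \<partial>Q))) = ereal (\<integral>x. g x \<partial>P)"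
    using fP by (simp add: g_def P.prob_space algebra_simps)
  also have "\<dots> \<le> KL P Q + ereal (cgf Q f lam)"
    using ex fP unfolding cgf_def cgf_exists_def g_def
    by (intro integral_le_KL_plus_ln_integral_exp[OF P Q sets]) auto
  also have "\<dots> \<le> KL P Q + ereal (psi lam)"
    using le by (intro add_left_mono) simp
  finally show "ereal ((\<integral>x. f x \<partial>P) - (\<integral>x. f x \<partial>Q)) \<le> (KL P Q + ereal (psi lam)) / ereal lam"
    using lam by (simp add: ereal_le_divide_pos)
qed

lemma expectation_gap_le_psi_star_inv_KL:
  fixes f :: "'a \<Rightarrow> real" and psi_plus psi_minus :: "real \<Rightarrow> real"
    and b_plus :: real and b_minus :: ereal
  assumes P: "prob_space P" and Q: "prob_space Q" and sets: "sets P = sets Q"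
    and fP: "integrable P f"
    and cgf_plus: "\<And>lam. 0 \<le> lam \<Longrightarrow> lam < b_plus \<Longrightarrow>
                     cgf_exists Q f lam \<and> cgf Q f lam \<le> psi_plus lam"
    and cgf_minus: "\<And>lam. b_minus < ereal lam \<Longrightarrow> lam \<le> 0 \<Longrightarrow>
                     cgf_exists Q f lam \<and> cgf Q f lam \<le> psi_minus (- lam)"
  shows "ereal ((\<integral>x. f x \<partial>P) - (\<integral>x. f x \<partial>Q)) \<le> psi_star_inv psi_plus {0<..<b_plus} (KL P Q)"
    and "ereal ((\<integral>x. f x \<partial>Q) - (\<integral>x. f x \<partial>P))
           \<le> psi_star_inv psi_minus {lam. 0 < lam \<and> ereal lam < - b_minus} (KL P Q)"
proof -
  show "ereal ((\<integral>x. f x \<partial>P) - (\<integral>x. f x \<partial>Q)) \<le> psi_star_inv psi_plus {0<..<b_plus} (KL P Q)"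
    using fP cgf_plus by (intro expectation_diff_le_psi_star_inv_KL[OF P Q sets]) auto
  have "cgf_exists Q (\<lambda>x. - f x) lam \<and> cgf Q (\<lambda>x. - f x) lam \<le> psi_minus lam"
    if "0 < lam" "ereal lam < - b_minus" for lam
    using that cgf_minus[of "- lam"]
    by (simp add: cgf_uminus cgf_exists_uminus ereal_less_uminus_reorder)
  then have "ereal ((\<integral>x. - f x \<partial>P) - (\<integral>x. - f x \<partial>Q))
      \<le> psi_star_inv psi_minus {lam. 0 < lam \<and> ereal lam < - b_minus} (KL P Q)"
    using fP by (intro expectation_diff_le_psi_star_inv_KL[OF P Q sets]) auto
  then show "ereal ((\<integral>x. f x \<partial>Q) - (\<integral>x. f x \<partial>P))
      \<le> psi_star_inv psi_minus {lam. 0 < lam \<and> ereal lam < - b_minus} (KL P Q)"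
    by simp
qed

lemma measurable_kernel_Pair:
  assumes K: "K \<in> S \<rightarrow>\<^sub>M prob_algebra M"
  shows "(\<lambda>s. distr (K s) (M \<Otimes>\<^sub>M S) (\<lambda>w. (w, s))) \<in> S \<rightarrow>\<^sub>M prob_algebra (M \<Otimes>\<^sub>M S)"
proof (rule measurable_prob_algebraI)
  fix s assume s: "s \<in> space S"
  then have "prob_space (K s)" and "sets (K s) = sets M"
    using measurable_space[OF K s] by (auto simp: space_prob_algebra)
  moreover have "(\<lambda>w. (w, s)) \<in> M \<rightarrow>\<^sub>M M \<Otimes>\<^sub>M S" using s by measurable
  ultimately show "prob_space (distr (K s) (M \<Otimes>\<^sub>M S) (\<lambda>w. (w, s)))"
    by (metis prob_space.prob_space_distr measurable_cong_sets)
next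
  have "K \<in> S \<rightarrow>\<^sub>M subprob_algebra M" using K by (rule measurable_prob_algebraD)
  then show "(\<lambda>s. distr (K s) (M \<Otimes>\<^sub>M S) (\<lambda>w. (w, s))) \<in> S \<rightarrow>\<^sub>M subprob_algebra (M \<Otimes>\<^sub>M S)"
    by (rule measurable_distr2[OF measurable_pair_swap'])
qed

lemma
  assumes "prob_space S" and "K \<in> S \<rightarrow>\<^sub>M prob_algebra M"
  shows prob_space_joint_WS: "prob_space (joint_WS M S K)"
    and sets_joint_WS: "sets (joint_WS M S K) = sets (M \<Otimes>\<^sub>M S)"
proof -
  have S: "S \<in> space (prob_algebra S)" using assms(1) by (simp add: space_prob_algebra)
  show "prob_space (joint_WS M S K)"
    unfolding joint_WS_def by (rule prob_space_bind'[OF S measurable_kernel_Pair[OF assms(2)]])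
  show "sets (joint_WS M S K) = sets (M \<Otimes>\<^sub>M S)"
    unfolding joint_WS_def by (rule sets_bind'[OF S measurable_kernel_Pair[OF assms(2)]])
qed

lemma gen_bar_eq_product_minus_average_joint:
  fixes PWS :: "('w \<times> (nat \<Rightarrow> 'z)) measure" and MW :: "'w measure" and mu :: "'z measure"
    and l :: "'w \<Rightarrow> 'z \<Rightarrow> real"
  defines "PW \<equiv> distr PWS MW fst"
    and "PWZ \<equiv> (\<lambda>i. distr PWS (MW \<Otimes>\<^sub>M mu) (\<lambda>ws. (fst ws, snd ws i)))"
    and "L \<equiv> (\<lambda>p. l (fst p) (snd p))"
  assumes PWS: "prob_space PWS" and sets_PWS: "sets PWS = sets (MW \<Otimes>\<^sub>M PiM {..<n} (\<lambda>_. mu))"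
    and mu: "prob_space mu" and L_meas: "L \<in> borel_measurable (MW \<Otimes>\<^sub>M mu)"
    and int_PW: "integrable (PW \<Otimes>\<^sub>M mu) L" and int_PWZ: "\<And>i. i < n \<Longrightarrow> integrable (PWZ i) L"
  shows "gen_bar n l PWS mu = (\<integral>p. L p \<partial>(PW \<Otimes>\<^sub>M mu)) - (\<Sum>i<n. \<integral>p. L p \<partial>PWZ i) / real n"
proof -
  interpret PWS: prob_space PWS by fact
  have fst_meas: "fst \<in> PWS \<rightarrow>\<^sub>M MW" using measurable_cong_sets[OF sets_PWS refl] by auto
  have proj_meas: "(\<lambda>ws. (fst ws, snd ws i)) \<in> PWS \<rightarrow>\<^sub>M MW \<Otimes>\<^sub>M mu" if "i \<in> {..<n}" for i
    unfolding measurable_cong_sets[OF sets_PWS refl] using that by measurable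
  interpret PW_mu: pair_sigma_finite PW mu
    using PWS.prob_space_distr[OF fst_meas] mu
    by (simp add: PW_def pair_sigma_finite_def prob_space_imp_sigma_finite)
  define phi where "phi w = (\<integral>z. l w z \<partial>mu)" for w
  have phi_int: "integrable PW phi" and phi_eq: "(\<integral>w. phi w \<partial>PW) = (\<integral>p. L p \<partial>(PW \<Otimes>\<^sub>M mu))"
    using PW_mu.integrable_fst'[OF int_PW] PW_mu.integral_fst'[OF int_PW]
    by (simp_all add: phi_def[abs_def] L_def)
  have phi_meas: "phi \<in> borel_measurable MW"
    using borel_measurable_integrable[OF phi_int] by (simp add: PW_def)
  have phi_S: "integrable PWS (\<lambda>ws. phi (fst ws))" "(\<integral>ws. phi (fst ws) \<partial>PWS) = (\<integral>w. phi w \<partial>PW)"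
    using phi_int integrable_distr_eq[OF fst_meas phi_meas] integral_distr[OF fst_meas phi_meas]
    by (simp_all add: PW_def)
  have l_S: "integrable PWS (\<lambda>ws. l (fst ws) (snd ws i))"
    "(\<integral>ws. l (fst ws) (snd ws i) \<partial>PWS) = (\<integral>p. L p \<partial>PWZ i)" if "i \<in> {..<n}" for i
    using that int_PWZ[of i] integrable_distr_eq[OF proj_meas[OF that] L_meas]
      integral_distr[OF proj_meas[OF that] L_meas]
    by (simp_all add: PWZ_def L_def)
  have "gen_bar n l PWS mu
      = (\<integral>ws. phi (fst ws) \<partial>PWS) - (\<integral>ws. (\<Sum>i<n. l (fst ws) (snd ws i)) \<partial>PWS) / real n"
    unfolding gen_bar_def phi_def[symmetric] using phi_S l_S
    by (subst Bochner_Integration.integral_diff) (auto intro!: integrable_divide_zero)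
  also have "(\<integral>ws. (\<Sum>i<n. l (fst ws) (snd ws i)) \<partial>PWS) = (\<Sum>i<n. \<integral>p. L p \<partial>PWZ i)"
    using l_S by (subst Bochner_Integration.integral_sum) auto
  finally show ?thesis using phi_S phi_eq by simp
qed

lemma ereal_mean_gap_le:
  fixes x :: real and y z :: "nat \<Rightarrow> real" and a b :: "nat \<Rightarrow> ereal"
  assumes "0 < n"
  shows "\<lbrakk>\<And>i. i < n \<Longrightarrow> ereal (x - z i) \<le> a i; \<And>i. i < n \<Longrightarrow> ereal (z i - y i) \<le> b i\<rbrakk> \<Longrightarrow>
           ereal (x - (\<Sum>i<n. y i) / real n) \<le> ereal (1 / real n) * (\<Sum>i<n. a i + b i)"
    and "\<lbrakk>\<And>i. i < n \<Longrightarrow> ereal (z i - x) \<le> a i; \<And>i. i < n \<Longrightarrow> ereal (y i - z i) \<le> b i\<rbrakk> \<Longrightarrow>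
           ereal ((\<Sum>i<n. y i) / real n - x) \<le> ereal (1 / real n) * (\<Sum>i<n. a i + b i)"
proof -
  have mean: "ereal ((\<Sum>i<n. d i) / real n) \<le> ereal (1 / real n) * (\<Sum>i<n. a i + b i)"
    if "\<And>i. i < n \<Longrightarrow> ereal (d i) \<le> a i + b i" for d :: "nat \<Rightarrow> real"
  proof -
    have "ereal (\<Sum>i<n. d i) \<le> (\<Sum>i<n. a i + b i)"
      unfolding sum_ereal[symmetric] using that by (intro sum_mono) auto
    then have "ereal (1 / real n) * ereal (\<Sum>i<n. d i) \<le> ereal (1 / real n) * (\<Sum>i<n. a i + b i)"
      by (rule ereal_mult_left_mono) simp
    then show ?thesis by simp
  qed
  show "ereal (x - (\<Sum>i<n. y i) / real n) \<le> ereal (1 / real n) * (\<Sum>i<n. a i + b i)"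
    if ha: "\<And>i. i < n \<Longrightarrow> ereal (x - z i) \<le> a i" and hb: "\<And>i. i < n \<Longrightarrow> ereal (z i - y i) \<le> b i"
  proof -
    have "ereal (x - y i) \<le> a i + b i" if "i < n" for i
      using add_mono[OF ha[OF that] hb[OF that]] by simp
    then show ?thesis using mean[of "\<lambda>i. x - y i"] \<open>0 < n\<close> by (simp add: sum_subtractf field_simps)
  qed
  show "ereal ((\<Sum>i<n. y i) / real n - x) \<le> ereal (1 / real n) * (\<Sum>i<n. a i + b i)"
    if ha: "\<And>i. i < n \<Longrightarrow> ereal (z i - x) \<le> a i" and hb: "\<And>i. i < n \<Longrightarrow> ereal (y i - z i) \<le> b i"
  proof -
    have "ereal (y i - x) \<le> a i + b i" if "i < n" for i
      using add_mono[OF ha[OF that] hb[OF that]] by simp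
    then show ?thesis using mean[of "\<lambda>i. y i - x"] \<open>0 < n\<close> by (simp add: sum_subtractf field_simps)
  qed
qed

theorem theorem1:
  fixes MW :: "'w measure" and mu :: "'z measure" and n :: nat
    and K :: "(nat \<Rightarrow> 'z) \<Rightarrow> 'w measure"
    and l :: "'w \<Rightarrow> 'z \<Rightarrow> real"
    and Phat :: "nat \<Rightarrow> ('w \<times> 'z) measure"
    and psi_plus psi_minus :: "real \<Rightarrow> real"
    and b_plus :: real and b_minus :: ereal
  defines "SS \<equiv> PiM {..<n} (\<lambda>_. mu)"
  defines "PWS \<equiv> joint_WS MW SS K"
  defines "PW \<equiv> distr PWS MW fst"
  defines "PWZ \<equiv> (\<lambda>i. distr PWS (MW \<Otimes>\<^sub>M mu) (\<lambda>ws. (fst ws, snd ws i)))"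
  defines "L \<equiv> (\<lambda>p. l (fst p) (snd p))"
  assumes n_pos: "0 < n"
    and mu_prob: "prob_space mu"
    and K_kernel: "K \<in> SS \<rightarrow>\<^sub>M prob_algebra MW"
    and l_meas: "L \<in> borel_measurable (MW \<Otimes>\<^sub>M mu)"
    and l_nonneg: "\<And>w z. l w z \<ge> 0"
    and gen_LP: "integrable (PW \<Otimes>\<^sub>M mu) L"
    and gen_LE: "\<And>i. i < n \<Longrightarrow> integrable (PWZ i) L"
    and Phat_prob: "\<And>i. i < n \<Longrightarrow> Phat i \<in> space (prob_algebra (MW \<Otimes>\<^sub>M mu))"
    and b_plus: "0 < b_plus"
    and b_minus: "b_minus < 0"
    and cgf_plus: "\<And>i lam. i < n \<Longrightarrow> 0 \<le> lam \<Longrightarrow> lam < b_plus \<Longrightarrow>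
                     cgf_exists (Phat i) L lam \<and> cgf (Phat i) L lam \<le> psi_plus lam"
    and cgf_minus: "\<And>i lam. i < n \<Longrightarrow> b_minus < ereal lam \<Longrightarrow> lam \<le> 0 \<Longrightarrow>
                     cgf_exists (Phat i) L lam \<and> cgf (Phat i) L lam \<le> psi_minus (- lam)"
    and psi_plus_convex: "convex_on {0..<b_plus} psi_plus"
    and psi_minus_convex: "convex_on {lam. 0 \<le> lam \<and> ereal lam < - b_minus} psi_minus"
    and psi_plus_0: "psi_plus 0 = 0"
    and psi_minus_0: "psi_minus 0 = 0"
    and psi_plus_deriv: "(psi_plus has_real_derivative 0) (at_right 0)"
    and psi_minus_deriv: "(psi_minus has_real_derivative 0) (at_right 0)"
  shows "ereal (gen_bar n l PWS mu) \<le>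
           ereal (1 / real n) *
             (\<Sum>i<n. psi_star_inv psi_plus {0<..<b_plus} (KL (PW \<Otimes>\<^sub>M mu) (Phat i))
                   + psi_star_inv psi_minus {lam. 0 < lam \<and> ereal lam < - b_minus} (KL (PWZ i) (Phat i)))
       \<and> ereal (- gen_bar n l PWS mu) \<le>
           ereal (1 / real n) *
             (\<Sum>i<n. psi_star_inv psi_minus {lam. 0 < lam \<and> ereal lam < - b_minus} (KL (PW \<Otimes>\<^sub>M mu) (Phat i))
                   + psi_star_inv psi_plus {0<..<b_plus} (KL (PWZ i) (Phat i)))"
proof -
  have SS: "prob_space SS" unfolding SS_def by (rule prob_space_PiM) (rule mu_prob)
  have PWS: "prob_space PWS" and sets_PWS: "sets PWS = sets (MW \<Otimes>\<^sub>M SS)"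
    unfolding PWS_def using prob_space_joint_WS[OF SS K_kernel] sets_joint_WS[OF SS K_kernel] by auto
  then have fst_meas: "fst \<in> PWS \<rightarrow>\<^sub>M MW" using measurable_cong_sets by auto
  have PW_mu: "prob_space (PW \<Otimes>\<^sub>M mu)" "sets (PW \<Otimes>\<^sub>M mu) = sets (MW \<Otimes>\<^sub>M mu)"
    using prob_space.prob_space_distr[OF PWS fst_meas] mu_prob unfolding PW_def
    by (auto intro: prob_space_pair sets_pair_measure_cong)
  have PWZ: "prob_space (PWZ i)" "sets (PWZ i) = sets (MW \<Otimes>\<^sub>M mu)" if "i < n" for i
    unfolding PWZ_def using that sets_PWS
    by (auto intro!: prob_space.prob_space_distr[OF PWS] simp: measurable_cong_sets[OF sets_PWS refl] SS_def)
  have gen: "gen_bar n l PWS mu = (\<integral>p. L p \<partial>(PW \<Otimes>\<^sub>M mu)) - (\<Sum>i<n. \<integral>p. L p \<partial>PWZ i) / real n"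
    using gen_bar_eq_product_minus_average_joint[OF PWS sets_PWS[unfolded SS_def] mu_prob]
      l_meas gen_LP gen_LE
    unfolding PW_def PWZ_def L_def by blast
  have gap: "ereal ((\<integral>p. L p \<partial>P) - (\<integral>p. L p \<partial>Phat i))
               \<le> psi_star_inv psi_plus {0<..<b_plus} (KL P (Phat i))"
    "ereal ((\<integral>p. L p \<partial>Phat i) - (\<integral>p. L p \<partial>P))
               \<le> psi_star_inv psi_minus {lam. 0 < lam \<and> ereal lam < - b_minus} (KL P (Phat i))"
    if i: "i < n" and P: "prob_space P" "sets P = sets (MW \<Otimes>\<^sub>M mu)" "integrable P L" for i P
    using expectation_gap_le_psi_star_inv_KL[OF P(1) _ _ P(3) cgf_plus[OF i] cgf_minus[OF i]]
      Phat_prob[OF i] P(2) by (auto simp: space_prob_algebra)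
  show ?thesis
    unfolding gen minus_diff_eq
    by (intro conjI ereal_mean_gap_le[OF n_pos, where z="\<lambda>i. \<integral>p. L p \<partial>Phat i"]
      gap[OF _ PW_mu gen_LP] gap[OF _ PWZ gen_LE])
qed

end
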